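(* Let $n\ge 2$, $A\in\mathbb{Z}^{d\times n}$, $\mathbf{b}\in\mathbb{Z}^d$, $\mathbf{c}\in\mathbb{Z}^n$, $\mathbf{u}\in\mathbb{Z}_{\ge0}^n$, and consider the ILP $\min\{\mathbf{c}^\top\mathbf{x} : A\mathbf{x}=\mathbf{b},\ \mathbf{0}\le\mathbf{x}\le\mathbf{u},\ \mathbf{x}\in\mathbb{Z}^n\}$. Let $\mathbf{x}_0$ be a feasible solution that is not optimal and let $\mathbf{x}_{\min}$ be an optimal solution. Then every sequence of discrete deepest-descent augmentations (with respect to the Graver basis $\mathcal{G}(A)$) starting at $\mathbf{x}_0$ reaches an optimal solution after at most $$\max\{1,\ (4n-4)\log_2\big(\mathbf{c}^\top(\mathbf{x}_0-\mathbf{x}_{\min})\big)\}$$ augmentations.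
   Context: Feasible solutions are the $\mathbf{x}\in\mathbb{Z}^n$ with $A\mathbf{x}=\mathbf{b}$, $\mathbf{0}\le\mathbf{x}\le\mathbf{u}$. For $\mathbf{v},\mathbf{w}\in\mathbb{R}^n$ write $\mathbf{v}\sqsubseteq\mathbf{w}$ if $v_iw_i\ge0$ and $|v_i|\le|w_i|$ for all $i$. The Graver basis $\mathcal{G}(A)$ is the (finite) set of $\sqsubseteq$-minimal elements of $(\ker(A)\cap\mathbb{Z}^n)\setminus\{\mathbf{0}\}$. Discrete deepest-descent augmentation: given a feasible $\mathbf{x}_k$, among all pairs $(\mathbf{z},\alpha)$ with $\mathbf{z}\in\mathcal{G}(A)$, $\alpha$ a positive integer and $\mathbf{x}_k+\alpha\mathbf{z}$ feasible, choose one maximizing $-\alpha\,\mathbf{c}^\top\mathbf{z}$; if this maximum is positive, set $\mathbf{x}_{k+1}:=\mathbf{x}_k+\alpha\mathbf{z}$, otherwise stop. *)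

theory Defs
  imports "HOL-Analysis.Analysis"
begin

text \<open>Vectors in Z^n are int^'n, matrices in Z^(d x n) are int^'n^'d.\<close>

definition feasible :: "int^'n^'d \<Rightarrow> int^'d \<Rightarrow> int^'n \<Rightarrow> int^'n \<Rightarrow> bool" where
  "feasible A b u x \<longleftrightarrow> A *v x = b \<and> (\<forall>i. 0 \<le> x$i \<and> x$i \<le> u$i)"

definition objval :: "int^'n \<Rightarrow> int^'n \<Rightarrow> int" where
  "objval c x = (\<Sum>i\<in>UNIV. c$i * x$i)"

definition optimal :: "int^'n^'d \<Rightarrow> int^'d \<Rightarrow> int^'n \<Rightarrow> int^'n \<Rightarrow> int^'n \<Rightarrow> bool" where
  "optimal A b u c x \<longleftrightarrow> feasible A b u x \<and> (\<forall>y. feasible A b u y \<longrightarrow> objval c x \<le> objval c y)"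

definition conf_le :: "int^'n \<Rightarrow> int^'n \<Rightarrow> bool" where
  "conf_le v w \<longleftrightarrow> (\<forall>i. 0 \<le> v$i * w$i \<and> \<bar>v$i\<bar> \<le> \<bar>w$i\<bar>)"

definition graver :: "int^'n^'d \<Rightarrow> (int^'n) set" where
  "graver A = {z. A *v z = 0 \<and> z \<noteq> 0 \<and>
      \<not> (\<exists>w. A *v w = 0 \<and> w \<noteq> 0 \<and> conf_le w z \<and> w \<noteq> z)}"

definition dd_step :: "int^'n^'d \<Rightarrow> int^'d \<Rightarrow> int^'n \<Rightarrow> int^'n \<Rightarrow> int^'n \<Rightarrow> int^'n \<Rightarrow> bool" where
  "dd_step A b u c x x' \<longleftrightarrow>
     (\<exists>z \<alpha>. z \<in> graver A \<and> \<alpha> > 0 \<and> feasible A b u (x + \<alpha> *s z) \<and>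
        (\<forall>z' \<alpha>'. z' \<in> graver A \<and> \<alpha>' > 0 \<and> feasible A b u (x + \<alpha>' *s z') \<longrightarrow>
            - \<alpha>' * objval c z' \<le> - \<alpha> * objval c z) \<and>
        - \<alpha> * objval c z > 0 \<and> x' = x + \<alpha> *s z)"

end

theory Submission
  imports Defs
begin

(* The argument has three parts.
   (1) Graver elements: every kernel vector of A is a sum of Graver elements conformal
       to it.  Together with the fact that moves conformal to a feasible direction stay
       feasible, this shows that a deepest-descent step exists from every non-optimal
       point (the set of candidate moves is finite), so a run can only stop at an optimum.
   (2) Gain estimate: if the best Graver augmentation from x improves the objective by D,
       then no feasible direction v improves it by more than 2 n D.  By a conic form of
       Caratheodory's theorem, v is a non-negative combination of at most n conformal
       Graver elements g with coefficients l; integer multiples floor(l) g are feasible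
       moves, and each term contributes at most 2D.
   (3) Counting: applying (2) to v = xmin - x shows that each step shrinks the optimality
       gap by the factor 1 - 1/(2n); elementary estimates on logarithms turn this into the
       bound max 1 ((4n - 4) log2 gap_0) on the number of steps. *)

(* The l1-norm; it strictly decreases along proper conformal refinements. *)
definition norm1 :: "int^'n \<Rightarrow> int" where
  "norm1 x = (\<Sum>i\<in>UNIV. \<bar>x$i\<bar>)"

lemma conformal_int_iff:
  "(0 \<le> a * b \<and> \<bar>a\<bar> \<le> \<bar>b\<bar>) \<longleftrightarrow> (0 \<le> a \<and> a \<le> b) \<or> (b \<le> a \<and> a \<le> (0::int))"
  by (auto simp: zero_le_mult_iff abs_if)

lemma conf_le_iff_between:
  "conf_le w v \<longleftrightarrow> (\<forall>i. (0 \<le> w$i \<and> w$i \<le> v$i) \<or> (v$i \<le> w$i \<and> w$i \<le> 0))"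
  by (simp add: conf_le_def conformal_int_iff)

lemma conf_le_refl: "conf_le v v"
  by (simp add: conf_le_def)

lemma conf_le_trans: "conf_le a b \<Longrightarrow> conf_le b c \<Longrightarrow> conf_le a c"
  unfolding conf_le_iff_between by (meson order_trans)

lemma conf_le_diff: "conf_le g v \<Longrightarrow> conf_le (v - g) v"
  unfolding conf_le_iff_between by (smt (verit) vector_minus_component)

lemma conf_le_abs_diff: "conf_le g v \<Longrightarrow> \<bar>(v - g)$i\<bar> = \<bar>v$i\<bar> - \<bar>g$i\<bar>"
  unfolding conf_le_iff_between by (erule allE[of _ i]) auto

lemma norm1_nonneg: "0 \<le> norm1 v"
  unfolding norm1_def by (simp add: sum_nonneg)

lemma norm1_pos: "v \<noteq> 0 \<Longrightarrow> 0 < norm1 v"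
proof -
  assume "v \<noteq> 0"
  then obtain j where j: "v$j \<noteq> 0" by (metis vec_eq_iff zero_index)
  have "\<bar>v$j\<bar> \<le> norm1 v" unfolding norm1_def by (rule member_le_sum) auto
  then show ?thesis using j by simp
qed

lemma norm1_diff: "conf_le g v \<Longrightarrow> norm1 (v - g) = norm1 v - norm1 g"
  unfolding norm1_def by (simp only: conf_le_abs_diff sum_subtractf)

lemma norm1_less: "conf_le w z \<Longrightarrow> w \<noteq> z \<Longrightarrow> norm1 w < norm1 z"
  using norm1_diff[of w z] norm1_pos[of "z - w"] by simp

(* Every non-zero kernel vector dominates a Graver element: take a conformally
   smaller kernel vector of least l1-norm. *)
lemma graver_below:
  assumes "A *v v = 0" "v \<noteq> 0"
  shows "\<exists>g. g \<in> graver A \<and> conf_le g v"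
proof -
  let ?P = "\<lambda>w. A *v w = 0 \<and> w \<noteq> 0 \<and> conf_le w v"
  have "?P v" using assms conf_le_refl by auto
  then obtain w where w: "?P w" and min: "\<And>y. ?P y \<Longrightarrow> nat (norm1 w) \<le> nat (norm1 y)"
    using ex_has_least_nat[of ?P v "\<lambda>w. nat (norm1 w)"] by blast
  have "\<not> (\<exists>y. A *v y = 0 \<and> y \<noteq> 0 \<and> conf_le y w \<and> y \<noteq> w)"
  proof
    assume "\<exists>y. A *v y = 0 \<and> y \<noteq> 0 \<and> conf_le y w \<and> y \<noteq> w"
    then obtain y where y: "A *v y = 0" "y \<noteq> 0" "conf_le y w" "y \<noteq> w" by blast
    then have "?P y" using w conf_le_trans by blast
    then have "nat (norm1 w) \<le> nat (norm1 y)" by (rule min)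
    moreover have "norm1 y < norm1 w" using norm1_less y by blast
    ultimately show False using norm1_nonneg[of y] by simp
  qed
  then show ?thesis using w unfolding graver_def by blast
qed

lemma graver_decomposition:
  "A *v v = 0 \<Longrightarrow> \<exists>gs. sum_list gs = v \<and> (\<forall>g\<in>set gs. g \<in> graver A \<and> conf_le g v)"
proof (induction "nat (norm1 v)" arbitrary: v rule: less_induct)
  case less
  show ?case
  proof (cases "v = 0")
    case True
    then show ?thesis by (intro exI[of _ "[]"]) auto
  next
    case False
    then obtain g where g: "g \<in> graver A" "conf_le g v" using graver_below less.prems by blast
    have g0: "g \<noteq> 0" "A *v g = 0" using g(1) by (auto simp: graver_def)
    have "nat (norm1 (v - g)) < nat (norm1 v)"
      using norm1_diff[OF g(2)] norm1_pos[OF g0(1)] norm1_nonneg[of "v - g"] by simp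
    moreover have "A *v (v - g) = 0"
      using less.prems g0 by (simp add: matrix_vector_mult_diff_distrib)
    ultimately obtain gs where
      gs: "sum_list gs = v - g" "\<forall>h\<in>set gs. h \<in> graver A \<and> conf_le h (v - g)"
      using less.hyps by blast
    show ?thesis
      using gs g conf_le_trans[OF _ conf_le_diff[OF g(2)]] by (intro exI[of _ "g # gs"]) auto
  qed
qed

lemma objval_add: "objval c (x + y) = objval c x + objval c y"
  unfolding objval_def by (simp add: distrib_left sum.distrib)

lemma objval_diff: "objval c (x - y) = objval c x - objval c y"
  unfolding objval_def by (simp add: right_diff_distrib sum_subtractf)

lemma objval_smult: "objval c (k *s x) = k * objval c x"
  unfolding objval_def by (simp add: sum_distrib_left algebra_simps)

lemma objval_zero: "objval c 0 = 0"
  unfolding objval_def by simp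

lemma objval_sum_list: "objval c (sum_list gs) = sum_list (map (objval c) gs)"
  by (induction gs) (auto simp: objval_add objval_zero)

(* If x and x + v are feasible, so is x + w for every kernel vector w conformal to v:
   each coordinate of x + w lies between those of x and x + v. *)
lemma feasible_conformal:
  assumes "feasible A b u x" "feasible A b u (x + v)" "A *v w = 0" "conf_le w v"
  shows "feasible A b u (x + w)"
  unfolding feasible_def
proof (intro conjI allI)
  show "A *v (x + w) = b"
    using assms(1,3) by (simp add: feasible_def matrix_vector_right_distrib)
  fix i
  have "0 \<le> x$i" "x$i \<le> u$i" "0 \<le> x$i + v$i" "x$i + v$i \<le> u$i"
    using assms(1,2) by (auto simp: feasible_def)
  moreover have "(0 \<le> w$i \<and> w$i \<le> v$i) \<or> (v$i \<le> w$i \<and> w$i \<le> 0)"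
    using assms(4) by (simp add: conf_le_iff_between)
  ultimately show "0 \<le> (x + w) $ i" "(x + w) $ i \<le> u $ i" by auto
qed

(* A non-optimal feasible point admits an improving unit Graver step: decompose
   the difference to a better point into conformal Graver elements. *)
lemma improving_graver_step:
  assumes "feasible A b u x" "\<not> optimal A b u c x"
  shows "\<exists>g. g \<in> graver A \<and> feasible A b u (x + g) \<and> objval c g < 0"
proof -
  obtain y where y: "feasible A b u y" "objval c y < objval c x"
    using assms unfolding optimal_def by (auto simp: not_le)
  define v where "v = y - x"
  have Av: "A *v v = 0"
    using y(1) assms(1) by (simp add: v_def feasible_def matrix_vector_mult_diff_distrib)
  obtain gs where gs: "sum_list gs = v" "\<forall>g\<in>set gs. g \<in> graver A \<and> conf_le g v"
    using graver_decomposition[OF Av] by blast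
  have "sum_list (map (objval c) gs) < 0"
    using y gs(1) by (simp add: v_def objval_diff flip: objval_sum_list)
  then obtain g where g: "g \<in> set gs" "objval c g < 0"
    using sum_list_nonneg[of "map (objval c) gs"] by (force simp: not_less)
  then have "g \<in> graver A" "conf_le g v" "A *v g = 0" using gs by (auto simp: graver_def)
  moreover have "feasible A b u (x + v)" using y(1) by (simp add: v_def)
  ultimately show ?thesis using feasible_conformal[OF assms(1)] g(2) by blast
qed

lemma finite_vec_box:
  assumes "finite S"
  shows "finite {z::'a^'n. \<forall>i. z$i \<in> S}"
proof -
  have "{z::'a^'n. \<forall>i. z$i \<in> S} \<subseteq> vec_lambda ` (Pi\<^sub>E UNIV (\<lambda>_. S))"
  proof
    fix z :: "'a^'n" assume "z \<in> {z. \<forall>i. z$i \<in> S}"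
    then have "(\<lambda>i. z$i) \<in> Pi\<^sub>E UNIV (\<lambda>_. S)" by auto
    then show "z \<in> vec_lambda ` (Pi\<^sub>E UNIV (\<lambda>_. S))"
      by (intro image_eqI[of _ _ "\<lambda>i. z$i"]) auto
  qed
  moreover have "finite (Pi\<^sub>E (UNIV::'n set) (\<lambda>_. S))" using assms by (intro finite_PiE) auto
  ultimately show ?thesis using finite_subset by blast
qed

definition graver_moves :: "int^'n^'d \<Rightarrow> int^'d \<Rightarrow> int^'n \<Rightarrow> int^'n \<Rightarrow> ((int^'n) \<times> int) set" where
  "graver_moves A b u x = {(z, \<alpha>). z \<in> graver A \<and> 0 < \<alpha> \<and> feasible A b u (x + \<alpha> *s z)}"

(* All candidate moves stay in the box [0, u], so there are finitely many. *)
lemma finite_graver_moves: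
  fixes x :: "int^'n"
  assumes "feasible A b u x"
  shows "finite (graver_moves A b u x)"
proof -
  define U where "U = (\<Sum>i\<in>UNIV. u$i)"
  have uU: "u$i \<le> U" for i
  proof -
    have "\<forall>j. 0 \<le> u$j"
    proof
      fix j have "0 \<le> x$j \<and> x$j \<le> u$j" using assms by (simp add: feasible_def)
      then show "0 \<le> u$j" by linarith
    qed
    then show ?thesis unfolding U_def by (intro member_le_sum) auto
  qed
  have "graver_moves A b u x \<subseteq> {z::int^'n. \<forall>i. z$i \<in> {-U..U}} \<times> {1..U}"
  proof clarify
    fix z and \<alpha> :: int assume "(z, \<alpha>) \<in> graver_moves A b u x"
    then have h: "z \<in> graver A" "0 < \<alpha>" "feasible A b u (x + \<alpha> *s z)"
      by (auto simp: graver_moves_def)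
    have move: "\<alpha> * \<bar>z$i\<bar> \<le> U" for i
    proof -
      have "0 \<le> x$i" "x$i \<le> u$i" "0 \<le> x$i + \<alpha> * z$i" "x$i + \<alpha> * z$i \<le> u$i"
        using assms h(3) by (auto simp: feasible_def)
      then have "\<bar>\<alpha> * z$i\<bar> \<le> U" using uU[of i] unfolding abs_le_iff by linarith
      then show ?thesis using h(2) by (simp add: abs_mult)
    qed
    have comp: "\<bar>z$i\<bar> \<le> U" for i
      using move[of i] mult_right_mono[of 1 \<alpha> "\<bar>z$i\<bar>"] h(2) by simp
    have "z \<noteq> 0" using h(1) by (simp add: graver_def)
    then obtain j where "z$j \<noteq> 0" by (metis vec_eq_iff zero_index)
    then have "\<alpha> * 1 \<le> \<alpha> * \<bar>z$j\<bar>" using h(2) by (intro mult_left_mono) auto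
    then have "\<alpha> \<le> U" using move[of j] by simp
    moreover have "z$i \<in> {-U..U}" for i using comp[of i] by (simp add: abs_le_iff)
    ultimately show "z \<in> {z. \<forall>i. z$i \<in> {-U..U}} \<and> \<alpha> \<in> {1..U}" using h(2) by simp
  qed
  moreover have "finite ({z::int^'n. \<forall>i. z$i \<in> {-U..U}} \<times> {1..U})"
    using finite_vec_box by blast
  ultimately show ?thesis using finite_subset by blast
qed

lemma dd_step_exists:
  assumes "feasible A b u x" "\<not> optimal A b u c x"
  shows "\<exists>y. dd_step A b u c x y"
proof -
  define S where "S = graver_moves A b u x"
  define gain where "gain = (\<lambda>(z, \<alpha>::int). - \<alpha> * objval c z)"
  obtain g where g: "g \<in> graver A" "feasible A b u (x + g)" "objval c g < 0"
    using improving_graver_step[OF assms] by blast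
  have gS: "(g, 1) \<in> S" using g by (simp add: S_def graver_moves_def)
  have fin: "finite S" unfolding S_def by (rule finite_graver_moves[OF assms(1)])
  have "Max (gain ` S) \<in> gain ` S" using fin gS by (intro Max_in) auto
  then obtain p where pS: "p \<in> S" and pmax: "gain p = Max (gain ` S)" by auto
  obtain z \<alpha> where p: "p = (z, \<alpha>)" by (cases p)
  have best: "gain q \<le> gain (z, \<alpha>)" if "q \<in> S" for q
    using Max_ge[of "gain ` S"] fin that pmax p by auto
  have "0 < - \<alpha> * objval c z" using best[OF gS] g(3) by (simp add: gain_def)
  moreover have "z \<in> graver A" "0 < \<alpha>" "feasible A b u (x + \<alpha> *s z)"
    using pS p by (auto simp: S_def graver_moves_def)
  moreover have "- \<alpha>' * objval c z' \<le> - \<alpha> * objval c z"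
    if "z' \<in> graver A \<and> 0 < \<alpha>' \<and> feasible A b u (x + \<alpha>' *s z')" for z' \<alpha>'
    using best[of "(z', \<alpha>')"] that by (simp add: S_def graver_moves_def gain_def)
  ultimately show ?thesis unfolding dd_step_def by blast
qed

lemma dd_step_feasible: "dd_step A b u c x x' \<Longrightarrow> feasible A b u x'"
  unfolding dd_step_def by blast

(* For the gain estimate we pass to real vectors: rv embeds Z^n in R^n,
   sign_vec v is the sign pattern of v and ray w the l1-normalised direction of w. *)
definition rv :: "int^'n \<Rightarrow> real^'n" where
  "rv w = (\<chi> i. real_of_int (w$i))"

definition sign_vec :: "int^'n \<Rightarrow> real^'n" where
  "sign_vec v = (\<chi> i. sgn (real_of_int (v$i)))"

definition ray :: "int^'n \<Rightarrow> real^'n" where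
  "ray w = inverse (real_of_int (norm1 w)) *\<^sub>R rv w"

lemma rv_nth [simp]: "rv w $ i = real_of_int (w$i)"
  by (simp add: rv_def)

lemma rv_sum_list: "rv (sum_list gs) = sum_list (map rv gs)"
  by (induction gs) (auto simp: vec_eq_iff)

lemma objval_rv: "real_of_int (objval c w) = rv c \<bullet> rv w"
  by (simp add: objval_def inner_vec_def)

lemma sgn_conformal:
  assumes "conf_le w v"
  shows "sgn (real_of_int (v$i)) * real_of_int (w$i) = real_of_int \<bar>w$i\<bar>"
  using assms by (auto simp: conf_le_iff_between sgn_if dest: spec[of _ i])

(* On vectors conformal to v, the sign pattern of v measures the l1-norm; hence the
   directions of such vectors lie on the hyperplane sign_vec v \<bullet> y = 1. *)
lemma sign_vec_conformal: "conf_le w v \<Longrightarrow> sign_vec v \<bullet> rv w = real_of_int (norm1 w)"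
  by (simp add: sign_vec_def norm1_def inner_vec_def sgn_conformal)

lemma sign_vec_ray: "conf_le g v \<Longrightarrow> g \<noteq> 0 \<Longrightarrow> sign_vec v \<bullet> ray g = 1"
  using norm1_pos[of g] by (simp add: ray_def sign_vec_conformal)

lemma sign_vec_nonzero: "v \<noteq> 0 \<Longrightarrow> sign_vec v \<noteq> 0"
  by (auto simp: sign_vec_def vec_eq_iff sgn_if split: if_splits)

(* The direction of a conformal sum is a convex combination of the directions of
   the summands, with weights proportional to their l1-norms. *)
lemma ray_in_convex_hull:
  assumes sum: "sum_list gs = v" and conf: "\<forall>g\<in>set gs. g \<noteq> 0 \<and> conf_le g v" and "v \<noteq> 0"
  shows "ray v \<in> convex hull (ray ` set gs)"
proof -
  define nv where "nv = real_of_int (norm1 v)"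
  define w where "w i = real_of_int (norm1 (gs!i)) / nv" for i
  have nv: "0 < nv" using norm1_pos[OF \<open>v \<noteq> 0\<close>] by (simp add: nv_def)
  have "nv = sign_vec v \<bullet> sum_list (map rv gs)"
    using sign_vec_conformal[OF conf_le_refl, of v] by (simp add: nv_def sum flip: rv_sum_list)
  also have "\<dots> = (\<Sum>i<length gs. real_of_int (norm1 (gs!i)))"
    using conf by (simp add: sum_list_sum_nth atLeast0LessThan inner_sum_right sign_vec_conformal)
  finally have "(\<Sum>i<length gs. w i) = 1"
    using nv by (simp add: w_def flip: sum_divide_distrib)
  moreover have "0 \<le> w i" "ray (gs!i) \<in> convex hull (ray ` set gs)" if "i \<in> {..<length gs}" for i
    using that nv by (auto simp: w_def norm1_nonneg intro!: hull_inc)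
  ultimately have "(\<Sum>i<length gs. w i *\<^sub>R ray (gs!i)) \<in> convex hull (ray ` set gs)"
    by (intro convex_sum) auto
  moreover have "(\<Sum>i<length gs. w i *\<^sub>R ray (gs!i)) = ray v"
  proof -
    have "w i *\<^sub>R ray (gs!i) = inverse nv *\<^sub>R rv (gs!i)" if "i < length gs" for i
      using norm1_pos[of "gs!i"] conf that by (auto simp: w_def ray_def divide_inverse)
    then have "(\<Sum>i<length gs. w i *\<^sub>R ray (gs!i)) = inverse nv *\<^sub>R sum_list (map rv gs)"
      by (simp add: sum_list_sum_nth atLeast0LessThan scaleR_sum_right)
    then show ?thesis by (simp add: ray_def nv_def sum flip: rv_sum_list)
  qed
  ultimately show ?thesis by simp
qed

(* The directions lie in an (n-1)-dimensional hyperplane,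
   so Caratheodory's theorem there needs at most n points. *)
lemma conformal_caratheodory:
  fixes v :: "int^'n"
  assumes sum: "sum_list gs = v" and conf: "\<forall>g\<in>set gs. g \<noteq> 0 \<and> conf_le g v"
  shows "\<exists>G coef. G \<subseteq> set gs \<and> card G \<le> CARD('n) \<and> (\<forall>g\<in>G. 0 \<le> coef g) \<and>
           rv v = (\<Sum>g\<in>G. coef g *\<^sub>R rv g)"
proof (cases "v = 0")
  case True
  then show ?thesis by (intro exI[of _ "{}"]) (simp add: vec_eq_iff)
next
  case False
  define P where "P = ray ` set gs"
  obtain T \<mu> where T: "finite T" "T \<subseteq> P" "card T \<le> aff_dim P + 1"
    and \<mu>: "\<forall>p\<in>T. 0 \<le> \<mu> p" "(\<Sum>p\<in>T. \<mu> p *\<^sub>R p) = ray v"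
    using ray_in_convex_hull[OF sum conf False] unfolding P_def convex_hull_caratheodory_aff_dim
    by blast
  have "P \<subseteq> {y. sign_vec v \<bullet> y = 1}" using conf sign_vec_ray by (auto simp: P_def)
  then have "aff_dim P \<le> aff_dim {y. sign_vec v \<bullet> y = 1}" by (rule aff_dim_subset)
  also have "\<dots> = int CARD('n) - 1" using sign_vec_nonzero[OF False] by simp
  finally have "aff_dim P \<le> int CARD('n) - 1" .
  then have cardT: "card T \<le> CARD('n)" using T(3) by linarith
  have "\<forall>p\<in>T. \<exists>g. g \<in> set gs \<and> ray g = p" using T(2) unfolding P_def by blast
  then obtain h where h: "\<And>p. p \<in> T \<Longrightarrow> h p \<in> set gs \<and> ray (h p) = p" by metis
  have inj: "inj_on h T" by (rule inj_onI) (metis h)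
  define nv where "nv = real_of_int (norm1 v)"
  define coef where "coef g = nv * \<mu> (ray g) / real_of_int (norm1 g)" for g
  have "rv v = nv *\<^sub>R ray v"
    using norm1_pos[OF False] by (simp add: ray_def nv_def)
  also have "\<dots> = (\<Sum>p\<in>T. coef (h p) *\<^sub>R rv (h p))"
    unfolding \<mu>(2)[symmetric] scaleR_sum_right
  proof (intro sum.cong refl)
    fix p assume "p \<in> T"
    then have p: "ray (h p) = p" using h by blast
    have "nv *\<^sub>R \<mu> (ray (h p)) *\<^sub>R ray (h p) = coef (h p) *\<^sub>R rv (h p)"
      by (simp add: coef_def ray_def divide_inverse mult.commute)
    then show "nv *\<^sub>R \<mu> p *\<^sub>R p = coef (h p) *\<^sub>R rv (h p)" by (simp only: p)
  qed
  also have "\<dots> = (\<Sum>g\<in>h ` T. coef g *\<^sub>R rv g)" by (simp add: sum.reindex[OF inj])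
  finally have "rv v = (\<Sum>g\<in>h ` T. coef g *\<^sub>R rv g)" .
  moreover have "\<forall>g\<in>h ` T. 0 \<le> coef g"
    using h \<mu>(1) by (auto simp: coef_def nv_def norm1_nonneg)
  moreover have "h ` T \<subseteq> set gs" "card (h ` T) \<le> CARD('n)"
    using h cardT card_image_le[OF T(1), of h] by auto
  ultimately show ?thesis by blast
qed

(* In a non-negative combination of vectors conformal to v there is no cancellation,
   so each term is coordinatewise dominated by v. *)
lemma conformal_coeff_bound:
  assumes "finite G" "g \<in> G" and conf: "\<forall>h\<in>G. conf_le h v \<and> 0 \<le> coef h"
    and rep: "rv v = (\<Sum>h\<in>G. coef h *\<^sub>R rv h)"
  shows "coef g * real_of_int \<bar>g$i\<bar> \<le> real_of_int \<bar>v$i\<bar>"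
proof -
  have "real_of_int \<bar>v$i\<bar> = sgn (real_of_int (v$i)) * rv v $ i"
    using sgn_conformal[OF conf_le_refl, of v i] by simp
  also have "\<dots> = (\<Sum>h\<in>G. coef h * real_of_int \<bar>h$i\<bar>)"
    unfolding rep sum_component sum_distrib_left
  proof (intro sum.cong refl)
    fix h assume "h \<in> G"
    then have "sgn (real_of_int (v$i)) * real_of_int (h$i) = real_of_int \<bar>h$i\<bar>"
      using conf sgn_conformal by blast
    then show "sgn (real_of_int (v$i)) * (coef h *\<^sub>R rv h) $ i = coef h * real_of_int \<bar>h$i\<bar>"
      by (simp add: algebra_simps)
  qed
  also have "\<dots> \<ge> coef g * real_of_int \<bar>g$i\<bar>"
    using assms(1,2) conf by (intro member_le_sum) auto
  finally show ?thesis .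
qed

(* D bounds the improvement achievable by any single Graver augmentation from x;
   for the deepest-descent step, D is its own improvement. *)
definition gain_bounded :: "int^'n^'d \<Rightarrow> int^'d \<Rightarrow> int^'n \<Rightarrow> int^'n \<Rightarrow> int^'n \<Rightarrow> int \<Rightarrow> bool" where
  "gain_bounded A b u c x D \<longleftrightarrow>
     (\<forall>z \<alpha>. z \<in> graver A \<and> 0 < \<alpha> \<and> feasible A b u (x + \<alpha> *s z) \<longrightarrow> - \<alpha> * objval c z \<le> D)"

lemma gain_boundedD:
  "gain_bounded A b u c x D \<Longrightarrow> z \<in> graver A \<Longrightarrow> 0 < \<alpha> \<Longrightarrow> feasible A b u (x + \<alpha> *s z)
    \<Longrightarrow> - \<alpha> * objval c z \<le> D"
  unfolding gain_bounded_def by blast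

(* If l g fits conformally inside the feasible direction v, then l times the gain of
   g is at most 2D: the integer step floor(l) * g is feasible and floor(l) > l/2. *)
lemma graver_gain_bound:
  fixes x v g :: "int^'n" and l :: real
  assumes fx: "feasible A b u x" and fv: "feasible A b u (x + v)"
    and g: "g \<in> graver A" "conf_le g v" and l: "0 \<le> l"
    and fits: "\<And>i. l * real_of_int \<bar>g$i\<bar> \<le> real_of_int \<bar>v$i\<bar>"
    and D: "gain_bounded A b u c x D" "0 \<le> D"
  shows "l * real_of_int (- objval c g) \<le> 2 * real_of_int D"
proof (cases "objval c g < 0 \<and> 1 \<le> l")
  case False
  show ?thesis
  proof (cases "objval c g < 0")
    case True
    have "feasible A b u (x + 1 *s g)"
      using feasible_conformal[OF fx fv _ g(2)] g(1) by (simp add: graver_def)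
    then have "- objval c g \<le> D" using gain_boundedD[OF D(1) g(1), of 1] by simp
    moreover have "l * real_of_int (- objval c g) \<le> real_of_int (- objval c g)"
      using True False l by (intro mult_left_le_one_le) auto
    ultimately show ?thesis using D(2) by linarith
  next
    case False
    then have "l * real_of_int (- objval c g) \<le> 0" using l by (simp add: mult_nonneg_nonpos)
    then show ?thesis using D(2) by linarith
  qed
next
  case True
  define k where "k = \<lfloor>l\<rfloor>"
  have k: "1 \<le> k" "real_of_int k \<le> l" "l < real_of_int k + 1"
    using True by (auto simp: k_def)
  have "conf_le (k *s g) v"
    unfolding conf_le_def
  proof (intro allI conjI)
    fix i
    have "0 \<le> g$i * v$i" using g(2) by (simp add: conf_le_def)
    then show "0 \<le> (k *s g) $ i * v $ i" using k(1) by (simp add: mult.assoc)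
    have "real_of_int k * real_of_int \<bar>g$i\<bar> \<le> l * real_of_int \<bar>g$i\<bar>"
      using k by (intro mult_right_mono) auto
    then have "real_of_int (k * \<bar>g$i\<bar>) \<le> real_of_int \<bar>v$i\<bar>" using fits[of i] by simp
    then have "k * \<bar>g$i\<bar> \<le> \<bar>v$i\<bar>" by linarith
    then show "\<bar>(k *s g) $ i\<bar> \<le> \<bar>v $ i\<bar>" using k(1) by (simp add: abs_mult)
  qed
  moreover have "A *v (k *s g) = k *s (A *v g)"
    by (simp add: vec_eq_iff matrix_vector_mult_def sum_distrib_left mult_ac)
  then have "A *v (k *s g) = 0" using g(1) by (simp add: graver_def)
  ultimately have "feasible A b u (x + k *s g)" using feasible_conformal[OF fx fv] by blast
  then have "real_of_int k * real_of_int (- objval c g) \<le> real_of_int D"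
    using gain_boundedD[OF D(1) g(1), of k] k(1) by (simp flip: of_int_mult)
  moreover have "l * real_of_int (- objval c g) \<le> (2 * real_of_int k) * real_of_int (- objval c g)"
    using True k by (intro mult_right_mono) auto
  ultimately show ?thesis by linarith
qed

(* Key estimate: no feasible direction improves the objective by more than 2 n D.
   Write v as a combination of at most n Graver elements and bound each term. *)
lemma direction_gain_bound:
  fixes x v :: "int^'n"
  assumes fx: "feasible A b u x" and fv: "feasible A b u (x + v)"
    and D: "gain_bounded A b u c x D" "0 \<le> D"
  shows "real_of_int (- objval c v) \<le> 2 * real CARD('n) * real_of_int D"
proof -
  have "A *v v = 0"
    using fx fv by (simp add: feasible_def matrix_vector_right_distrib)
  then obtain gs where gs: "sum_list gs = v" "\<forall>g\<in>set gs. g \<in> graver A \<and> conf_le g v"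
    using graver_decomposition by blast
  then have "\<forall>g\<in>set gs. g \<noteq> 0 \<and> conf_le g v" by (auto simp: graver_def)
  then obtain G coef where G: "G \<subseteq> set gs" "card G \<le> CARD('n)" "\<forall>g\<in>G. 0 \<le> coef g"
    and rep: "rv v = (\<Sum>g\<in>G. coef g *\<^sub>R rv g)"
    using conformal_caratheodory[OF gs(1)] by blast
  have finG: "finite G" using G(1) finite_subset by blast
  have GA: "g \<in> graver A" "conf_le g v" if "g \<in> G" for g using G(1) gs(2) that by auto
  have "real_of_int (- objval c v) = (\<Sum>g\<in>G. coef g * real_of_int (- objval c g))"
    by (simp add: objval_rv rep inner_sum_right sum_negf)
  also have "\<dots> \<le> (\<Sum>g\<in>G. 2 * real_of_int D)"
  proof (rule sum_mono)
    fix g assume g: "g \<in> G"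
    have "coef g * real_of_int \<bar>g$i\<bar> \<le> real_of_int \<bar>v$i\<bar>" for i
      using conformal_coeff_bound[OF finG g _ rep] G(3) GA by blast
    then show "coef g * real_of_int (- objval c g) \<le> 2 * real_of_int D"
      using graver_gain_bound[OF fx fv GA[OF g] _ _ D] G(3) g by blast
  qed
  also have "\<dots> \<le> real CARD('n) * (2 * real_of_int D)"
    using G(2) D(2) by (simp add: mult_right_mono)
  finally show ?thesis by simp
qed

lemma dd_step_contraction:
  fixes x x' xmin :: "int^'n"
  assumes fx: "feasible A b u x" and step: "dd_step A b u c x x'" and opt: "optimal A b u c xmin"
  shows "objval c x' < objval c x"
    and "real_of_int (objval c x' - objval c xmin)
           \<le> (1 - 1 / (2 * real CARD('n))) * real_of_int (objval c x - objval c xmin)"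
proof -
  obtain z \<alpha> where D: "gain_bounded A b u c x (- \<alpha> * objval c z)"
    and pos: "0 < - \<alpha> * objval c z" and x': "x' = x + \<alpha> *s z"
    using step unfolding dd_step_def gain_bounded_def by blast
  define gap where "gap = objval c x - objval c xmin"
  have "feasible A b u (x + (xmin - x))" using opt by (simp add: optimal_def)
  from direction_gain_bound[OF fx this D] pos
  have "real_of_int gap \<le> 2 * real CARD('n) * real_of_int (- \<alpha> * objval c z)"
    by (simp add: gap_def objval_diff)
  moreover have "objval c x' - objval c xmin = gap - (- \<alpha> * objval c z)"
    by (simp add: x' gap_def objval_add objval_smult)
  ultimately show "real_of_int (objval c x' - objval c xmin)
      \<le> (1 - 1 / (2 * real CARD('n))) * real_of_int (objval c x - objval c xmin)"
    by (simp add: gap_def field_simps)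
  show "objval c x' < objval c x" using pos by (simp add: x' objval_add objval_smult)
qed

lemma contraction_decay:
  fixes f :: "nat \<Rightarrow> real"
  assumes "0 \<le> q" and "\<forall>k<m. f (Suc k) \<le> q * f k" and "k \<le> m"
  shows "f k \<le> q ^ k * f 0"
  using assms(3)
proof (induction k)
  case (Suc k)
  then have "f (Suc k) \<le> q * f k" using assms(2) by simp
  also have "\<dots> \<le> q * (q ^ k * f 0)" using Suc assms(1) by (intro mult_left_mono) auto
  finally show ?case by simp
qed simp

(* If a gap g >= 1 is still at least 1 after k contractions by 1 - 1/(2N), then
   k + 1 <= max 1 ((4N - 4) log2 g); uses ln (1 - t) <= -t and ln 2 <= 3/4. *)
lemma log_bound_from_decay:
  fixes N :: real and g :: int and k :: nat
  assumes N: "2 \<le> N" and g: "1 \<le> g" and h: "1 \<le> real_of_int g * (1 - 1 / (2 * N)) ^ k"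
  shows "real (Suc k) \<le> max 1 ((4 * N - 4) * log 2 (real_of_int g))"
proof (cases "g = 1")
  case True
  have q: "0 < 1 - 1 / (2 * N)" "1 - 1 / (2 * N) < 1" using N by (auto simp: field_simps)
  have "k = 0"
  proof (rule ccontr)
    assume "k \<noteq> 0"
    then have "(1 - 1 / (2 * N)) ^ k < 1" using q by (intro power_less_one_iff[THEN iffD2]) auto
    then show False using h True by simp
  qed
  then show ?thesis by simp
next
  case False
  then have g2: "2 \<le> real_of_int g" using g by linarith
  define q where "q = 1 - 1 / (2 * N)"
  define L where "L = ln (real_of_int g)"
  have q: "0 < q" "q - 1 = - 1 / (2 * N)" using N by (auto simp: field_simps q_def)
  have l: "0 < ln (2::real)" "ln (2::real) \<le> 3/4" using ln2_le_25_over_36 by auto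
  have Ll: "ln 2 \<le> L" unfolding L_def using g2 by simp
  have "0 = ln 1" by simp
  also have "\<dots> \<le> ln (real_of_int g * q ^ k)" using h q g2 by (subst ln_le_cancel_iff) (auto simp: q_def)
  also have "\<dots> = L + real k * ln q" using q g2 by (simp add: ln_mult ln_realpow L_def)
  also have "\<dots> \<le> L + real k * (- 1 / (2 * N))"
    using ln_le_minus_one[OF q(1)] q(2) by (intro add_left_mono mult_left_mono) auto
  finally have kL: "real k \<le> 2 * N * L" using N by (simp add: field_simps)
  have L0: "0 \<le> L" unfolding L_def using g2 by simp
  have "N * L * ln 2 \<le> N * L * (3/4)" using l N L0 by (intro mult_left_mono) auto
  moreover have "2 * L \<le> N * L" using N L0 by (intro mult_right_mono) auto
  moreover have "ln 2 * (1 + 2 * N * L) = ln 2 + 2 * (N * L * ln 2)" by (simp add: algebra_simps)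
  ultimately have "ln 2 * (1 + 2 * N * L) \<le> (4 * N - 4) * L" using Ll by (simp add: algebra_simps)
  then have "1 + 2 * N * L \<le> (4 * N - 4) * L / ln 2" using l by (simp add: field_simps)
  also have "\<dots> = (4 * N - 4) * log 2 (real_of_int g)" by (simp add: log_def L_def)
  finally show ?thesis using kL by simp
qed

lemma contraction_steps_bound:
  fixes N :: real and g :: "nat \<Rightarrow> int"
  assumes N: "2 \<le> N"
    and dec: "\<forall>k<m. g (Suc k) < g k \<and> real_of_int (g (Suc k)) \<le> (1 - 1 / (2 * N)) * real_of_int (g k)"
    and "0 \<le> g m"
  shows "real m \<le> max 1 ((4 * N - 4) * log 2 (real_of_int (g 0)))"
proof (cases m)
  case (Suc k)
  let ?f = "\<lambda>k. real_of_int (g k)"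
  have "g (Suc k) < g k" using dec[rule_format, of k] Suc by simp
  then have gk: "1 \<le> g k" using Suc \<open>0 \<le> g m\<close> by simp
  have "?f k \<le> 1 ^ k * ?f 0" using dec Suc by (intro contraction_decay[of 1 m ?f k]) auto
  then have "1 \<le> g 0" using gk by simp
  moreover have "?f k \<le> (1 - 1 / (2 * N)) ^ k * ?f 0"
    using dec Suc N by (intro contraction_decay[of _ m ?f k]) auto
  then have "1 \<le> ?f 0 * (1 - 1 / (2 * N)) ^ k" using gk by (simp add: mult.commute)
  ultimately show ?thesis using log_bound_from_decay[OF N] Suc by blast
qed simp

theorem lemma1:
  fixes A :: "int^'n^'d" and b :: "int^'d" and c u x0 xmin :: "int^'n"
  assumes "CARD('n) \<ge> 2"
    and "\<forall>i. u$i \<ge> 0"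
    and "feasible A b u x0" and "\<not> optimal A b u c x0"
    and "optimal A b u c xmin"
  shows "\<forall>(m::nat) (xs::nat \<Rightarrow> int^'n). xs 0 = x0 \<and> (\<forall>k<m. dd_step A b u c (xs k) (xs (Suc k))) \<longrightarrow>
           real m \<le> max 1 ((4 * real CARD('n) - 4) * log 2 (real_of_int (objval c (x0 - xmin))))
           \<and> ((\<nexists>y. dd_step A b u c (xs m) y) \<longrightarrow> optimal A b u c (xs m))"
proof (intro allI impI conjI)
  fix m :: nat and xs :: "nat \<Rightarrow> int^'n"
  assume run: "xs 0 = x0 \<and> (\<forall>k<m. dd_step A b u c (xs k) (xs (Suc k)))"
  have feas: "feasible A b u (xs k)" if "k \<le> m" for k
  proof (cases k)
    case (Suc j)
    then show ?thesis using that run dd_step_feasible[of A b u c "xs j"] by simp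
  qed (use run assms(3) in simp)
  define gap where "gap k = objval c (xs k) - objval c xmin" for k
  have "\<forall>k<m. gap (Suc k) < gap k \<and>
          real_of_int (gap (Suc k)) \<le> (1 - 1 / (2 * real CARD('n))) * real_of_int (gap k)"
    using dd_step_contraction[OF feas _ assms(5)] run by (simp add: gap_def)
  moreover have "0 \<le> gap m" using feas[of m] assms(5) by (simp add: gap_def optimal_def)
  ultimately have "real m \<le> max 1 ((4 * real CARD('n) - 4) * log 2 (real_of_int (gap 0)))"
    using assms(1) by (intro contraction_steps_bound) auto
  then show "real m \<le> max 1 ((4 * real CARD('n) - 4) * log 2 (real_of_int (objval c (x0 - xmin))))"
    using run by (simp add: gap_def objval_diff)
  show "optimal A b u c (xs m)" if "\<nexists>y. dd_step A b u c (xs m) y"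
    using dd_step_exists[OF feas[OF order_refl]] that by blast
qed

end
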